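(* Let $V_1,V_2$ be finite-dimensional real vector spaces, $G_1\subset\mathrm{GL}(V_1)$, $G_2\subset\mathrm{GL}(V_2)$ Lie subgroups, $\mathcal{P}$ a monoid, and $\rho_i:\mathcal{P}\to G_i$ ($i=1,2$) monoid homomorphisms; let $H_i$ be the closure in $G_i$ of the subgroup generated by $\rho_i(\mathcal{P})$. Let $f:V_1\to V_2$ be a linear map with $\rho_2(\gamma)\circ f=f\circ\rho_1(\gamma)$ for all $\gamma\in\mathcal{P}$. Assume $G_1$ is compact. Then for every $h_2\in H_2$ there exists $h_1\in H_1$ such that $f\circ h_1=h_2\circ f$. *)

theory Defs
  imports "HOL-Analysis.Analysis"
begin

text \<open>Linear maps of a finite-dimensional real vector space are modelled as bounded
  linear functions (every linear map is bounded in finite dimension); the space of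
  such maps carries its natural (operator-norm) topology.\<close>

definition GL :: "('a::euclidean_space \<Rightarrow>\<^sub>L 'a) set" where
  "GL = {g. \<exists>h. g o\<^sub>L h = id_blinfun \<and> h o\<^sub>L g = id_blinfun}"

definition subgroup_GL :: "('a::euclidean_space \<Rightarrow>\<^sub>L 'a) set \<Rightarrow> bool" where
  "subgroup_GL K \<longleftrightarrow> K \<subseteq> GL \<and> id_blinfun \<in> K
     \<and> (\<forall>g\<in>K. \<forall>h\<in>K. g o\<^sub>L h \<in> K)
     \<and> (\<forall>g\<in>K. \<exists>h\<in>K. g o\<^sub>L h = id_blinfun \<and> h o\<^sub>L g = id_blinfun)"

definition generated_subgroup_GL :: "('a::euclidean_space \<Rightarrow>\<^sub>L 'a) set \<Rightarrow> ('a \<Rightarrow>\<^sub>L 'a) set" where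
  "generated_subgroup_GL S = \<Inter>{K. subgroup_GL K \<and> S \<subseteq> K}"

definition monoid_hom_GL :: "('p::monoid_mult \<Rightarrow> ('a::euclidean_space \<Rightarrow>\<^sub>L 'a)) \<Rightarrow> bool" where
  "monoid_hom_GL \<rho> \<longleftrightarrow> \<rho> 1 = id_blinfun \<and> (\<forall>x y. \<rho> (x * y) = \<rho> x o\<^sub>L \<rho> y)"

definition closure_generated_in :: "('a::euclidean_space \<Rightarrow>\<^sub>L 'a) set \<Rightarrow> ('p \<Rightarrow> ('a \<Rightarrow>\<^sub>L 'a)) \<Rightarrow> ('a \<Rightarrow>\<^sub>L 'a) set" where
  "closure_generated_in G \<rho> = G \<inter> closure (generated_subgroup_GL (range \<rho>))"

end

theory Submission
  imports Defs
begin

text \<open>The maps \<open>b\<close> with \<open>b \<circ> f = f \<circ> a\<close> for some \<open>a\<close> in the group generated by \<open>\<rho>\<^sub>1(\<P>)\<close>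
  form a subgroup of \<open>GL(V\<^sub>2)\<close> containing \<open>\<rho>\<^sub>2(\<P>)\<close>, hence they contain the whole group generated
  by \<open>\<rho>\<^sub>2(\<P>)\<close>. If \<open>h\<^sub>2\<close> is a limit of such maps \<open>b\<^sub>n\<close>, the corresponding \<open>a\<^sub>n\<close> lie in the
  compact group \<open>G\<^sub>1\<close>, so a subsequence converges to some \<open>h\<^sub>1\<close>, and passing to the limit in
  \<open>b\<^sub>n \<circ> f = f \<circ> a\<^sub>n\<close> gives \<open>h\<^sub>2 \<circ> f = f \<circ> h\<^sub>1\<close>. Only the images of \<open>\<rho>\<^sub>1, \<rho>\<^sub>2\<close> matter.\<close>

lemma blinfun_compose_assoc: "(a o\<^sub>L b) o\<^sub>L c = a o\<^sub>L (b o\<^sub>L c)"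
  by (rule blinfun_eqI) simp

lemma blinfun_compose_id_left [simp]: "id_blinfun o\<^sub>L a = a"
  by (rule blinfun_eqI) simp

lemma blinfun_compose_id_right [simp]: "a o\<^sub>L id_blinfun = a"
  by (rule blinfun_eqI) simp

lemma blinfun_inverse_unique:
  assumes "g o\<^sub>L h = id_blinfun" and "h' o\<^sub>L g = id_blinfun"
  shows "h = h'"
proof -
  have "h = (h' o\<^sub>L g) o\<^sub>L h" using assms by simp
  also have "\<dots> = h' o\<^sub>L (g o\<^sub>L h)" by (rule blinfun_compose_assoc)
  also have "\<dots> = h'" using assms by simp
  finally show ?thesis .
qed

lemma GL_inverse_in_GL:
  assumes "g o\<^sub>L h = id_blinfun" and "h o\<^sub>L g = id_blinfun"
  shows "h \<in> GL"
  using assms unfolding GL_def by blast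

lemma id_blinfun_in_GL: "id_blinfun \<in> GL"
  by (rule GL_inverse_in_GL) simp_all

lemma GL_compose:
  assumes "g \<in> GL" and "h \<in> GL"
  shows "g o\<^sub>L h \<in> GL"
proof -
  obtain g' where g': "g o\<^sub>L g' = id_blinfun" "g' o\<^sub>L g = id_blinfun"
    using assms(1) unfolding GL_def by blast
  obtain h' where h': "h o\<^sub>L h' = id_blinfun" "h' o\<^sub>L h = id_blinfun"
    using assms(2) unfolding GL_def by blast
  have "(g o\<^sub>L h) o\<^sub>L (h' o\<^sub>L g') = id_blinfun" "(h' o\<^sub>L g') o\<^sub>L (g o\<^sub>L h) = id_blinfun"
    using g' h' by (metis blinfun_compose_assoc blinfun_compose_id_left)+
  then show ?thesis unfolding GL_def by blast
qed

lemma subgroup_GL_GL: "subgroup_GL GL"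
  unfolding subgroup_GL_def
  using id_blinfun_in_GL GL_compose GL_inverse_in_GL by (auto simp: GL_def)

text \<open>Inverses are unique, so an element of every member of the family has its inverse in
  every member as well.\<close>
lemma subgroup_GL_Inter:
  assumes "\<K> \<noteq> {}" and "\<And>K. K \<in> \<K> \<Longrightarrow> subgroup_GL K"
  shows "subgroup_GL (\<Inter>\<K>)"
  unfolding subgroup_GL_def
proof (intro conjI ballI)
  show "\<Inter>\<K> \<subseteq> GL" "id_blinfun \<in> \<Inter>\<K>"
    using assms unfolding subgroup_GL_def by blast+
  show "g o\<^sub>L h \<in> \<Inter>\<K>" if "g \<in> \<Inter>\<K>" "h \<in> \<Inter>\<K>" for g h
    using that assms(2) unfolding subgroup_GL_def by blast
next
  fix g assume g: "g \<in> \<Inter>\<K>"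
  obtain K0 where "K0 \<in> \<K>" using assms(1) by blast
  then obtain h where h: "g o\<^sub>L h = id_blinfun" "h o\<^sub>L g = id_blinfun"
    using g assms(2) unfolding subgroup_GL_def by blast
  have "h \<in> K" if K: "K \<in> \<K>" for K
  proof -
    obtain h' where "h' \<in> K" "h' o\<^sub>L g = id_blinfun"
      using g K assms(2) unfolding subgroup_GL_def by blast
    with h show ?thesis using blinfun_inverse_unique by metis
  qed
  with h show "\<exists>h\<in>\<Inter>\<K>. g o\<^sub>L h = id_blinfun \<and> h o\<^sub>L g = id_blinfun" by blast
qed

lemma subgroup_GL_generated:
  assumes "S \<subseteq> GL"
  shows "subgroup_GL (generated_subgroup_GL S)"
  unfolding generated_subgroup_GL_def
  using assms subgroup_GL_GL by (intro subgroup_GL_Inter) auto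

lemma generated_subgroup_GL_superset: "S \<subseteq> generated_subgroup_GL S"
  unfolding generated_subgroup_GL_def by blast

lemma generated_subgroup_GL_minimal:
  assumes "subgroup_GL K" and "S \<subseteq> K"
  shows "generated_subgroup_GL S \<subseteq> K"
  unfolding generated_subgroup_GL_def using assms by blast

lemma subgroup_GL_intertwiners:
  assumes "subgroup_GL A"
  shows "subgroup_GL {b \<in> GL. \<exists>a\<in>A. b o\<^sub>L f = f o\<^sub>L a}" (is "subgroup_GL ?K")
  unfolding subgroup_GL_def
proof (intro conjI ballI)
  show "id_blinfun \<in> ?K"
    using assms id_blinfun_in_GL unfolding subgroup_GL_def by force
next
  fix g h assume "g \<in> ?K" "h \<in> ?K"
  then obtain a1 a2 where "g \<in> GL" "h \<in> GL" "a1 \<in> A" "a2 \<in> A"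
    and a: "g o\<^sub>L f = f o\<^sub>L a1" "h o\<^sub>L f = f o\<^sub>L a2"
    by blast
  moreover have "(g o\<^sub>L h) o\<^sub>L f = f o\<^sub>L (a1 o\<^sub>L a2)"
    using a by (metis blinfun_compose_assoc)
  ultimately show "g o\<^sub>L h \<in> ?K"
    using assms GL_compose unfolding subgroup_GL_def by blast
next
  fix g assume "g \<in> ?K"
  then obtain a where "g \<in> GL" "a \<in> A" and a: "g o\<^sub>L f = f o\<^sub>L a" by blast
  then obtain g' where g': "g o\<^sub>L g' = id_blinfun" "g' o\<^sub>L g = id_blinfun"
    unfolding GL_def by blast
  obtain a' where "a' \<in> A" and a': "a o\<^sub>L a' = id_blinfun"
    using assms \<open>a \<in> A\<close> unfolding subgroup_GL_def by blast
  have "g' o\<^sub>L f = g' o\<^sub>L f o\<^sub>L (a o\<^sub>L a')" using a' by simp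
  also have "\<dots> = g' o\<^sub>L (g o\<^sub>L f) o\<^sub>L a'" using a by (simp add: blinfun_compose_assoc)
  also have "\<dots> = f o\<^sub>L a'" using g' by (metis blinfun_compose_assoc blinfun_compose_id_left)
  finally have "g' \<in> ?K"
    using \<open>a' \<in> A\<close> GL_inverse_in_GL[OF g'] by blast
  with g' show "\<exists>h\<in>?K. g o\<^sub>L h = id_blinfun \<and> h o\<^sub>L g = id_blinfun"
    by blast
qed auto

lemma generated_subgroup_GL_intertwined:
  assumes "S1 \<subseteq> GL" and "S2 \<subseteq> GL"
    and "\<forall>b\<in>S2. \<exists>a\<in>generated_subgroup_GL S1. b o\<^sub>L f = f o\<^sub>L a"
  shows "\<forall>b\<in>generated_subgroup_GL S2. \<exists>a\<in>generated_subgroup_GL S1. b o\<^sub>L f = f o\<^sub>L a"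
proof -
  let ?K = "{b \<in> GL. \<exists>a\<in>generated_subgroup_GL S1. b o\<^sub>L f = f o\<^sub>L a}"
  have "subgroup_GL ?K"
    using assms(1) by (intro subgroup_GL_intertwiners subgroup_GL_generated)
  moreover have "S2 \<subseteq> ?K" using assms(2,3) by blast
  ultimately have "generated_subgroup_GL S2 \<subseteq> ?K" by (rule generated_subgroup_GL_minimal)
  then show ?thesis by blast
qed

lemma closure_intertwined_compact:
  fixes f :: "'a::real_normed_vector \<Rightarrow>\<^sub>L 'b::real_normed_vector"
  assumes "compact C" and "A \<subseteq> C" and "\<forall>b\<in>B. \<exists>a\<in>A. b o\<^sub>L f = f o\<^sub>L a"
    and "h \<in> closure B"
  shows "\<exists>l\<in>closure A. f o\<^sub>L l = h o\<^sub>L f"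
proof -
  obtain b where b: "\<And>n. b n \<in> B" and "b \<longlonglongrightarrow> h"
    using assms(4) unfolding closure_sequential by blast
  have "\<forall>n. \<exists>a\<in>A. b n o\<^sub>L f = f o\<^sub>L a" using b assms(3) by blast
  then obtain a where a: "\<And>n. a n \<in> A" and ab: "\<And>n. b n o\<^sub>L f = f o\<^sub>L a n"
    by metis
  obtain l r where "strict_mono r" and al: "(a \<circ> r) \<longlonglongrightarrow> l"
    using compact_imp_seq_compact[OF assms(1)] a assms(2) unfolding seq_compact_def by blast
  have "l \<in> closure A"
    unfolding closure_sequential using a al by (intro exI[of _ "a \<circ> r"]) auto
  moreover have "f o\<^sub>L l = h o\<^sub>L f"
  proof (rule LIMSEQ_unique)
    show "(\<lambda>n. f o\<^sub>L (a \<circ> r) n) \<longlonglongrightarrow> (f o\<^sub>L l)"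
      using al by (intro bounded_bilinear.tendsto[OF bounded_bilinear_blinfun_compose] tendsto_const)
    have "(b \<circ> r) \<longlonglongrightarrow> h" using \<open>b \<longlonglongrightarrow> h\<close> \<open>strict_mono r\<close> by (rule LIMSEQ_subseq_LIMSEQ)
    then have "(\<lambda>n. (b \<circ> r) n o\<^sub>L f) \<longlonglongrightarrow> (h o\<^sub>L f)"
      by (intro bounded_bilinear.tendsto[OF bounded_bilinear_blinfun_compose] tendsto_const)
    then show "(\<lambda>n. f o\<^sub>L (a \<circ> r) n) \<longlonglongrightarrow> (h o\<^sub>L f)" using ab by simp
  qed
  ultimately show ?thesis by blast
qed

theorem proposition4p16:
  fixes G1 :: "('a::euclidean_space \<Rightarrow>\<^sub>L 'a) set"
    and G2 :: "('b::euclidean_space \<Rightarrow>\<^sub>L 'b) set"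
    and \<rho>1 :: "'p::monoid_mult \<Rightarrow> ('a \<Rightarrow>\<^sub>L 'a)"
    and \<rho>2 :: "'p \<Rightarrow> ('b \<Rightarrow>\<^sub>L 'b)"
    and f :: "'a \<Rightarrow>\<^sub>L 'b"
  assumes "subgroup_GL G1" and "subgroup_GL G2"
    and "compact G1"
    and "monoid_hom_GL \<rho>1" and "monoid_hom_GL \<rho>2"
    and "range \<rho>1 \<subseteq> G1" and "range \<rho>2 \<subseteq> G2"
    and "\<And>\<gamma>. \<rho>2 \<gamma> o\<^sub>L f = f o\<^sub>L \<rho>1 \<gamma>"
  shows "\<forall>h2 \<in> closure_generated_in G2 \<rho>2. \<exists>h1 \<in> closure_generated_in G1 \<rho>1.
           f o\<^sub>L h1 = h2 o\<^sub>L f"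
proof
  fix h2 assume h2: "h2 \<in> closure_generated_in G2 \<rho>2"
  let ?S1 = "generated_subgroup_GL (range \<rho>1)"
  let ?S2 = "generated_subgroup_GL (range \<rho>2)"
  have "range \<rho>1 \<subseteq> GL" "range \<rho>2 \<subseteq> GL"
    using assms(1,2,6,7) unfolding subgroup_GL_def by blast+
  moreover have "\<forall>b\<in>range \<rho>2. \<exists>a\<in>?S1. b o\<^sub>L f = f o\<^sub>L a"
    using assms(8) generated_subgroup_GL_superset by blast
  ultimately have intertwined: "\<forall>b\<in>?S2. \<exists>a\<in>?S1. b o\<^sub>L f = f o\<^sub>L a"
    by (rule generated_subgroup_GL_intertwined)
  have "?S1 \<subseteq> G1" using assms(1,6) by (rule generated_subgroup_GL_minimal)
  then obtain h1 where "h1 \<in> closure ?S1" "f o\<^sub>L h1 = h2 o\<^sub>L f"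
    using closure_intertwined_compact[OF assms(3) _ intertwined] h2
    unfolding closure_generated_in_def by blast
  moreover have "closure ?S1 \<subseteq> G1"
    using \<open>?S1 \<subseteq> G1\<close> compact_imp_closed[OF assms(3)] by (rule closure_minimal)
  ultimately show "\<exists>h1 \<in> closure_generated_in G1 \<rho>1. f o\<^sub>L h1 = h2 o\<^sub>L f"
    unfolding closure_generated_in_def by blast
qed

end
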